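(* Let $n\ge 3$ and let $\mathbb{F}$ be a field of characteristic $0$ or of odd prime characteristic $p$. In the group algebra $\mathbb{F}D_{2n}$: (i) the set $\{a^i-a^{-i},\ (a^i-a^{-i})b \mid i=1,2,\dots,\lfloor\frac{n-1}{2}\rfloor\}$ is an $\mathbb{F}$-basis of $\bar{C}(b)$; (ii) the set $\{a^i-a^{-i},\ a(a^i-a^{-i})b \mid i=1,2,\dots,\lfloor\frac{n-1}{2}\rfloor\}$ is an $\mathbb{F}$-basis of $\bar{C}(ab)$.
   Context: $D_{2n}=\langle a,b\mid a^n=1,\ b^2=1,\ (ab)^2=1\rangle$ is the dihedral group of order $2n$, whose elements are $a^ib^j$ with $0\le i\le n-1$, $0\le j\le 1$. $\mathbb{F}D_{2n}$ is its group algebra over $\mathbb{F}$. For $\beta\in\mathbb{F}D_{2n}$, the anti-centralizer of $\beta$ is $\bar{C}(\beta)=\{\alpha\in\mathbb{F}D_{2n}\mid \alpha\beta=-\beta\alpha\}$, an $\mathbb{F}$-subspace. $\lfloor x\rfloor$ denotes the floor of $x$. *)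

theory Defs
  imports Main "HOL.Vector_Spaces" "HOL-Library.Function_Algebras" "HOL-Computational_Algebra.Primes"
begin

text \<open>Dihedral group D_{2n}: the element a^i b^j (0 <= i < n, 0 <= j < 2) is encoded
  as the pair (i, j).  Relations a^n = 1, b^2 = 1, (ab)^2 = 1 give b a^k = a^(-k) b, hence
  (a^i b^j)(a^k b^l) = a^(i + (-1)^j k) b^(j+l).\<close>

definition dih :: "nat \<Rightarrow> (nat \<times> nat) set" where
  "dih n = {0..<n} \<times> {0..<2}"

definition dmul :: "nat \<Rightarrow> nat \<times> nat \<Rightarrow> nat \<times> nat \<Rightarrow> nat \<times> nat" where
  "dmul n g h = (case g of (i, j) \<Rightarrow> case h of (k, l) \<Rightarrow>
      ((if j = 0 then i + k else i + (n - k)) mod n, (j + l) mod 2))"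

definition galg :: "nat \<Rightarrow> (nat \<times> nat \<Rightarrow> 'a::field) set" where
  "galg n = {\<alpha>. \<forall>g. g \<notin> dih n \<longrightarrow> \<alpha> g = 0}"

definition gscale :: "'a::field \<Rightarrow> (nat \<times> nat \<Rightarrow> 'a) \<Rightarrow> (nat \<times> nat \<Rightarrow> 'a)" where
  "gscale c \<alpha> = (\<lambda>g. c * \<alpha> g)"

definition gmul :: "nat \<Rightarrow> (nat \<times> nat \<Rightarrow> 'a::field) \<Rightarrow> (nat \<times> nat \<Rightarrow> 'a) \<Rightarrow> (nat \<times> nat \<Rightarrow> 'a)" where
  "gmul n \<alpha> \<beta> = (\<lambda>g. \<Sum>(h, k) \<in> {(h, k). h \<in> dih n \<and> k \<in> dih n \<and> dmul n h k = g}. \<alpha> h * \<beta> k)"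

definition gel :: "nat \<times> nat \<Rightarrow> nat \<times> nat \<Rightarrow> 'a::field" where
  "gel g = (\<lambda>h. if h = g then 1 else 0)"

definition ael :: "nat \<Rightarrow> int \<Rightarrow> nat \<times> nat \<Rightarrow> 'a::field" where
  "ael n i = gel (nat (i mod int n), 0)"

definition bel :: "nat \<times> nat \<Rightarrow> 'a::field" where
  "bel = gel (0, 1)"

definition anticent :: "nat \<Rightarrow> (nat \<times> nat \<Rightarrow> 'a::field) \<Rightarrow> (nat \<times> nat \<Rightarrow> 'a) set" where
  "anticent n \<beta> = {\<alpha> \<in> galg n. gmul n \<alpha> \<beta> = - gmul n \<beta> \<alpha>}"

definition is_basis_of :: "(nat \<times> nat \<Rightarrow> 'a::field) set \<Rightarrow> (nat \<times> nat \<Rightarrow> 'a) set \<Rightarrow> bool" where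
  "is_basis_of W S \<longleftrightarrow> S \<subseteq> W \<and> \<not> module.dependent gscale S \<and> module.span gscale S = W"

end

theory Submission
  imports Defs
begin

text \<open>For an involution t of the dihedral group, \<open>\<alpha>t = -t\<alpha>\<close> is equivalent to \<open>t\<alpha>t = -\<alpha>\<close>, so the
  anti-centralizer of t is the (-1)-eigenspace of conjugation by t, which permutes the group
  elements. Each orbit {g, tgt} of length two contributes the basis vector g - tgt, and fixed points
  contribute nothing because 2 is invertible. Both b and ab are reflections a^k b, and conjugation
  by a^k b sends a^i b^j to a^(2kj - i) b^j, a reflection of the rotations within each coset of
  \<open>\<langle>a\<rangle>\<close>; the exponents i = kj + 1, ..., kj + floor((n-1)/2) pick one element from each orbit of
  length two and yield exactly the stated bases.\<close>

section \<open>The dihedral group law\<close>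

lemma dih_iff: "(i, j) \<in> dih n \<longleftrightarrow> i < n \<and> j < 2"
  by (simp add: dih_def)

lemma finite_dih: "finite (dih n)"
  by (simp add: dih_def)

lemma mod_less_2n: "a < 2 * n \<Longrightarrow> a mod (n::nat) = (if a < n then a else a - n)"
  by (simp add: le_mod_geq)

lemma dmul_in_dih: "0 < n \<Longrightarrow> dmul n x y \<in> dih n"
  by (auto simp: dmul_def dih_def split: prod.splits)

lemma snd_dmul: "snd (dmul n x y) = (snd x + snd y) mod 2"
  by (simp add: dmul_def split: prod.splits)

lemma int_fst_dmul:
  assumes "snd x < 2" "y \<in> dih n"
  shows "int (fst (dmul n x y)) = (int (fst x) + (- 1) ^ snd x * int (fst y)) mod int n"
proof -
  obtain i j k l where xy: "x = (i, j)" "y = (k, l)" "j < 2" "k < n"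
    using assms by (cases x; cases y) (auto simp: dih_iff)
  show ?thesis
  proof (cases "j = 0")
    case True
    then show ?thesis by (simp add: xy dmul_def zmod_int)
  next
    case False
    then have "j = 1" using xy by simp
    moreover have "int ((i + (n - k)) mod n) = (int i - int k + int n) mod int n"
      using xy by (simp add: zmod_int of_nat_diff algebra_simps)
    ultimately show ?thesis by (simp add: xy dmul_def)
  qed
qed

lemma neg_one_power_mod_2: "(- 1 :: int) ^ (j mod 2) = (- 1) ^ j"
  by (cases "even j") auto

lemma dmul_assoc:
  assumes "x \<in> dih n" "y \<in> dih n" "z \<in> dih n"
  shows "dmul n (dmul n x y) z = dmul n x (dmul n y z)"
proof -
  have n: "0 < n" using assms by (auto simp: dih_def)
  have lt: "snd x < 2" "snd y < 2" "snd (dmul n x y) < 2"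
    using assms by (auto simp: dih_def snd_dmul)
  define sx sy where "sx = (- 1 :: int) ^ snd x" and "sy = (- 1 :: int) ^ snd y"
  have "int (fst (dmul n (dmul n x y) z))
      = ((int (fst x) + sx * int (fst y)) mod int n + sx * sy * int (fst z)) mod int n"
    using assms n lt
    by (simp add: int_fst_dmul dmul_in_dih snd_dmul neg_one_power_mod_2 power_add sx_def sy_def)
  also have "\<dots> = (int (fst x) + sx * (int (fst y) + sy * int (fst z))) mod int n"
    by (simp only: mod_add_left_eq) (simp add: algebra_simps)
  also have "\<dots> = (int (fst x) + sx * ((int (fst y) + sy * int (fst z)) mod int n)) mod int n"
    by (metis mod_add_right_eq mod_mult_right_eq)
  also have "\<dots> = int (fst (dmul n x (dmul n y z)))"
    using assms n lt by (simp add: int_fst_dmul dmul_in_dih sx_def sy_def)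
  finally show ?thesis
    by (simp add: prod_eq_iff snd_dmul mod_add_left_eq mod_add_right_eq add.assoc)
qed

lemma dmul_unit_left: "x \<in> dih n \<Longrightarrow> dmul n (0, 0) x = x"
  by (auto simp: dih_def dmul_def)

lemma dmul_unit_right: "x \<in> dih n \<Longrightarrow> dmul n x (0, 0) = x"
  by (auto simp: dih_def dmul_def)

lemma dmul_inverse_exists:
  assumes "y \<in> dih n"
  obtains z where "z \<in> dih n" "dmul n y z = (0, 0)" "dmul n z y = (0, 0)"
proof -
  obtain i j where y: "y = (i, j)" "i < n" "j < 2" using assms by (cases y) (auto simp: dih_iff)
  show ?thesis
  proof (cases "j = 0")
    case True
    then show ?thesis
      using y by (intro that[of "((n - i) mod n, 0)"]) (auto simp: dih_iff dmul_def mod_less_2n)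
  next
    case False
    then show ?thesis
      using y by (intro that[of y]) (auto simp: dih_iff dmul_def)
  qed
qed

lemma dmul_eq_iff_right:
  assumes "g \<in> dih n" "h \<in> dih n" "y \<in> dih n" "z \<in> dih n"
    and "dmul n y z = (0, 0)" "dmul n z y = (0, 0)"
  shows "dmul n h y = g \<longleftrightarrow> h = dmul n g z"
proof
  assume "dmul n h y = g"
  then show "h = dmul n g z"
    using assms dmul_assoc[of h n y z] by (simp add: dmul_unit_right)
next
  assume "h = dmul n g z"
  then show "dmul n h y = g"
    using assms dmul_assoc[of g n z y] by (simp add: dmul_unit_right)
qed

lemma dmul_eq_iff_left:
  assumes "g \<in> dih n" "h \<in> dih n" "y \<in> dih n" "z \<in> dih n"
    and "dmul n y z = (0, 0)" "dmul n z y = (0, 0)"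
  shows "dmul n y h = g \<longleftrightarrow> h = dmul n z g"
proof
  assume "dmul n y h = g"
  then show "h = dmul n z g"
    using assms dmul_assoc[of z n y h] by (simp add: dmul_unit_left)
next
  assume "h = dmul n z g"
  then show "dmul n y h = g"
    using assms dmul_assoc[of y n z g] by (simp add: dmul_unit_left)
qed

section \<open>Convolution with group elements\<close>

lemma galg_outside: "\<alpha> \<in> galg n \<Longrightarrow> g \<notin> dih n \<Longrightarrow> \<alpha> g = 0"
  unfolding galg_def by blast

lemma gel_in_galg: "x \<in> dih n \<Longrightarrow> gel x \<in> galg n"
  by (auto simp: galg_def gel_def)

lemma galg_diff: "\<alpha> \<in> galg n \<Longrightarrow> \<beta> \<in> galg n \<Longrightarrow> \<alpha> - \<beta> \<in> galg n"
  by (simp add: galg_def)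

lemma finite_gmul_index: "finite {(h, k). h \<in> dih n \<and> k \<in> dih n \<and> dmul n h k = g}"
  by (rule finite_subset[of _ "dih n \<times> dih n"]) (auto simp: finite_dih)

lemma gmul_outside:
  assumes "g \<notin> dih n" "0 < n"
  shows "gmul n \<alpha> \<beta> g = 0"
proof -
  have empty: "{(h, k). h \<in> dih n \<and> k \<in> dih n \<and> dmul n h k = g} = {}"
    using assms dmul_in_dih by blast
  show ?thesis unfolding gmul_def by (subst empty) simp
qed

lemma gmul_gel_right:
  assumes "g \<in> dih n" "y \<in> dih n" "z \<in> dih n" "dmul n y z = (0, 0)" "dmul n z y = (0, 0)"
  shows "gmul n \<alpha> (gel y) g = \<alpha> (dmul n g z)"
proof -
  have n: "0 < n" using assms by (auto simp: dih_def)
  let ?T = "{(h, k). h \<in> dih n \<and> k \<in> dih n \<and> dmul n h k = g}"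
  note solve = dmul_eq_iff_right[OF assms(1) _ assms(2-)]
  have "dmul n g z \<in> dih n" using n by (rule dmul_in_dih)
  then have single: "{(dmul n g z, y)} \<subseteq> ?T"
    using assms(2) solve by auto
  have vanish: "\<alpha> h * gel y k = 0" if "(h, k) \<in> ?T - {(dmul n g z, y)}" for h k
  proof -
    have "k \<noteq> y" using that solve by blast
    then show ?thesis by (simp add: gel_def)
  qed
  have "gmul n \<alpha> (gel y) g = (\<Sum>(h, k)\<in>?T. \<alpha> h * gel y k)"
    by (simp add: gmul_def)
  also have "\<dots> = (\<Sum>(h, k)\<in>{(dmul n g z, y)}. \<alpha> h * gel y k)"
    using vanish by (intro sum.mono_neutral_right[OF finite_gmul_index single]) fast
  finally show ?thesis by (simp add: gel_def)
qed

lemma gmul_gel_left: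
  assumes "g \<in> dih n" "y \<in> dih n" "z \<in> dih n" "dmul n y z = (0, 0)" "dmul n z y = (0, 0)"
  shows "gmul n (gel y) \<alpha> g = \<alpha> (dmul n z g)"
proof -
  have n: "0 < n" using assms by (auto simp: dih_def)
  let ?T = "{(h, k). h \<in> dih n \<and> k \<in> dih n \<and> dmul n h k = g}"
  note solve = dmul_eq_iff_left[OF assms(1) _ assms(2-)]
  have "dmul n z g \<in> dih n" using n by (rule dmul_in_dih)
  then have single: "{(y, dmul n z g)} \<subseteq> ?T"
    using assms(2) solve by auto
  have vanish: "gel y h * \<alpha> k = 0" if "(h, k) \<in> ?T - {(y, dmul n z g)}" for h k
  proof -
    have "h \<noteq> y" using that solve by blast
    then show ?thesis by (simp add: gel_def)
  qed
  have "gmul n (gel y) \<alpha> g = (\<Sum>(h, k)\<in>?T. gel y h * \<alpha> k)"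
    by (simp add: gmul_def)
  also have "\<dots> = (\<Sum>(h, k)\<in>{(y, dmul n z g)}. gel y h * \<alpha> k)"
    using vanish by (intro sum.mono_neutral_right[OF finite_gmul_index single]) fast
  finally show ?thesis by (simp add: gel_def)
qed

lemma gmul_gel_gel:
  assumes "x \<in> dih n" "y \<in> dih n"
  shows "gmul n (gel x) (gel y) = gel (dmul n x y)"
proof
  fix g
  have n: "0 < n" using assms by (auto simp: dih_def)
  obtain z where z: "z \<in> dih n" "dmul n y z = (0, 0)" "dmul n z y = (0, 0)"
    using dmul_inverse_exists[OF assms(2)] .
  show "gmul n (gel x) (gel y) g = gel (dmul n x y) g"
  proof (cases "g \<in> dih n")
    case True
    have "dmul n g z = x \<longleftrightarrow> g = dmul n x y"
      using dmul_eq_iff_right[OF True assms z] by metis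
    then show ?thesis unfolding gmul_gel_right[OF True assms(2) z] by (simp add: gel_def)
  next
    case False
    have "dmul n x y \<noteq> g" using False dmul_in_dih[OF n] by blast
    then show ?thesis using gmul_outside[OF False n] by (simp add: gel_def)
  qed
qed

lemma gmul_diff_left: "gmul n (\<alpha> - \<beta>) \<gamma> = gmul n \<alpha> \<gamma> - gmul n \<beta> \<gamma>"
  by (simp add: gmul_def fun_eq_iff left_diff_distrib sum_subtractf case_prod_beta)

lemma gmul_diff_right: "gmul n \<gamma> (\<alpha> - \<beta>) = gmul n \<gamma> \<alpha> - gmul n \<gamma> \<beta>"
  by (simp add: gmul_def fun_eq_iff right_diff_distrib sum_subtractf case_prod_beta)

lemma gmul_unit_left:
  assumes "0 < n" "\<beta> \<in> galg n"
  shows "gmul n (gel (0, 0)) \<beta> = \<beta>"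
proof
  fix g
  have e: "(0, 0) \<in> dih n" "dmul n (0, 0) (0, 0) = (0, 0)" using assms(1) by (simp_all add: dih_iff dmul_def)
  show "gmul n (gel (0, 0)) \<beta> g = \<beta> g"
    using gmul_gel_left[OF _ e(1) e(1) e(2) e(2)] dmul_unit_left gmul_outside[OF _ assms(1)]
      galg_outside[OF assms(2)] by (cases "g \<in> dih n") simp_all
qed

section \<open>Anti-centralizers of involutions\<close>

definition neg_eigenspace ::
    "nat \<Rightarrow> (nat \<times> nat \<Rightarrow> nat \<times> nat) \<Rightarrow> (nat \<times> nat \<Rightarrow> 'a::field) set" where
  "neg_eigenspace n \<sigma> = {\<alpha> \<in> galg n. \<forall>x\<in>dih n. \<alpha> (\<sigma> x) = - \<alpha> x}"

lemma gmul_gel_anticommute_iff: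
  assumes t: "t \<in> dih n" "dmul n t t = (0, 0)"
  shows "gmul n \<alpha> (gel t) = - gmul n (gel t) \<alpha>
    \<longleftrightarrow> (\<forall>g\<in>dih n. \<alpha> (dmul n g t) = - \<alpha> (dmul n t g))"
proof
  assume eq: "gmul n \<alpha> (gel t) = - gmul n (gel t) \<alpha>"
  show "\<forall>g\<in>dih n. \<alpha> (dmul n g t) = - \<alpha> (dmul n t g)"
  proof
    fix g assume g: "g \<in> dih n"
    have "gmul n \<alpha> (gel t) g = - gmul n (gel t) \<alpha> g" using eq by simp
    then show "\<alpha> (dmul n g t) = - \<alpha> (dmul n t g)"
      by (simp only: gmul_gel_right[OF g t(1,1,2,2)] gmul_gel_left[OF g t(1,1,2,2)])
  qed
next
  assume eq: "\<forall>g\<in>dih n. \<alpha> (dmul n g t) = - \<alpha> (dmul n t g)"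
  have n: "0 < n" using t by (auto simp: dih_def)
  show "gmul n \<alpha> (gel t) = - gmul n (gel t) \<alpha>"
  proof
    fix g
    show "gmul n \<alpha> (gel t) g = (- gmul n (gel t) \<alpha>) g"
    proof (cases "g \<in> dih n")
      case True
      then show ?thesis
        using eq by (simp add: gmul_gel_right[OF True t(1,1,2,2)] gmul_gel_left[OF True t(1,1,2,2)])
    next
      case False
      then show ?thesis by (simp add: gmul_outside[OF False n])
    qed
  qed
qed

lemma anticent_gel_involution:
  assumes t: "t \<in> dih n" "dmul n t t = (0, 0)"
  shows "anticent n (gel t) = neg_eigenspace n (\<lambda>x. dmul n t (dmul n x t))"
proof -
  have n: "0 < n" using t by (auto simp: dih_def)
  have cancel: "dmul n (dmul n x t) t = x" if "x \<in> dih n" for x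
    using that t by (simp add: dmul_assoc dmul_unit_right)
  \<comment> \<open>substitute \<open>g = xt\<close>, using \<open>gt = x\<close>\<close>
  have "(\<forall>g\<in>dih n. \<alpha> (dmul n g t) = - \<alpha> (dmul n t g))
      \<longleftrightarrow> (\<forall>x\<in>dih n. \<alpha> (dmul n t (dmul n x t)) = - \<alpha> x)" for \<alpha> :: "nat \<times> nat \<Rightarrow> 'a"
    using cancel dmul_in_dih[OF n] by (metis minus_equation_iff)
  then show ?thesis
    by (simp add: anticent_def neg_eigenspace_def gmul_gel_anticommute_iff[OF t])
qed

lemma gscale_module: "module (gscale :: 'a::field \<Rightarrow> _)"
  by unfold_locales (auto simp: gscale_def fun_eq_iff algebra_simps)

lemma sum_fun_apply: "(\<Sum>a\<in>A. f a) x = (\<Sum>a\<in>A. f a x)"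
  by (induction A rule: infinite_finite_induct) auto

lemma self_eq_neg_imp_zero: "(2::'a::field) \<noteq> 0 \<Longrightarrow> (x::'a) = - x \<Longrightarrow> x = 0"
  by (metis add_eq_0_iff mult_2 mult_eq_0_iff)

lemma two_neq_zero_if_CHAR_neq_2:
  assumes "CHAR('a::{semiring_1, zero_neq_one}) \<noteq> 2"
  shows "(2::'a) \<noteq> 0"
proof
  assume "(2::'a) = 0"
  then have "CHAR('a) dvd 2" using of_nat_eq_0_iff_char_dvd[where 'a = 'a, of 2] by simp
  then have "CHAR('a) \<le> 2" by (rule dvd_imp_le) simp
  moreover have "CHAR('a) \<noteq> 0"
  proof
    assume "CHAR('a) = 0"
    with \<open>CHAR('a) dvd 2\<close> show False by simp
  qed
  ultimately show False using assms CHAR_not_1[where 'a = 'a] by linarith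
qed

definition orbit_vec :: "(nat \<times> nat \<Rightarrow> nat \<times> nat) \<Rightarrow> nat \<times> nat \<Rightarrow> nat \<times> nat \<Rightarrow> 'a::field" where
  "orbit_vec \<sigma> r = gel r - gel (\<sigma> r)"

lemma orbit_vec_at: "r \<noteq> \<sigma> r' \<Longrightarrow> orbit_vec \<sigma> r' r = (if r' = r then 1 else 0)"
  by (auto simp: orbit_vec_def gel_def)

lemma orbit_vec_swap:
  assumes "\<sigma> (\<sigma> r) = r" "\<sigma> (\<sigma> x) = x"
  shows "orbit_vec \<sigma> r (\<sigma> x) = - orbit_vec \<sigma> r x"
proof -
  have "\<sigma> x = r \<longleftrightarrow> x = \<sigma> r" "\<sigma> x = \<sigma> r \<longleftrightarrow> x = r"
    using assms by auto
  then show ?thesis by (simp add: orbit_vec_def gel_def)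
qed

lemma orbit_vec_in_neg_eigenspace:
  assumes "\<And>x. x \<in> dih n \<Longrightarrow> \<sigma> x \<in> dih n" "\<And>x. x \<in> dih n \<Longrightarrow> \<sigma> (\<sigma> x) = x" "r \<in> dih n"
  shows "orbit_vec \<sigma> r \<in> (neg_eigenspace n \<sigma> :: (nat \<times> nat \<Rightarrow> 'a::field) set)"
proof -
  have "(orbit_vec \<sigma> r :: nat \<times> nat \<Rightarrow> 'a) \<in> galg n"
    unfolding orbit_vec_def using assms by (intro galg_diff gel_in_galg) auto
  moreover have "orbit_vec \<sigma> r (\<sigma> x) = - (orbit_vec \<sigma> r x :: 'a)" if "x \<in> dih n" for x
    using assms(2)[OF that] assms(2)[OF assms(3)] by (rule orbit_vec_swap[rotated])
  ultimately show ?thesis unfolding neg_eigenspace_def by blast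
qed

lemma sum_orbit_vec_at:
  fixes c :: "nat \<times> nat \<Rightarrow> 'a::field"
  assumes "finite R" "x \<in> R" "\<And>r r'. r \<in> R \<Longrightarrow> r' \<in> R \<Longrightarrow> r \<noteq> \<sigma> r'"
  shows "(\<Sum>r\<in>R. c r * orbit_vec \<sigma> r x) = c x"
proof -
  have "(\<Sum>r\<in>R. c r * orbit_vec \<sigma> r x) = (\<Sum>r\<in>R. if r = x then c r else 0)"
    using assms(2,3) by (intro sum.cong) (auto simp: orbit_vec_at)
  then show ?thesis using assms(1,2) by simp
qed

lemma independent_orbit_vecs:
  assumes "\<And>r r'. r \<in> R \<Longrightarrow> r' \<in> R \<Longrightarrow> r \<noteq> \<sigma> r'"
  shows "\<not> module.dependent gscale (orbit_vec \<sigma> ` R :: (nat \<times> nat \<Rightarrow> 'a::field) set)"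
proof -
  interpret M: module "gscale :: 'a \<Rightarrow> _" by (rule gscale_module)
  let ?B = "orbit_vec \<sigma> ` R :: (nat \<times> nat \<Rightarrow> 'a) set"
  show ?thesis
  proof
    assume "M.dependent ?B"
    then obtain T u v where T: "finite T" "T \<subseteq> ?B" "(\<Sum>v\<in>T. gscale (u v) v) = 0"
      and v: "v \<in> T" "u v \<noteq> 0"
      unfolding M.dependent_explicit by blast
    obtain r where r: "r \<in> R" "v = orbit_vec \<sigma> r" using T v by blast
    have val: "v' r = (if v' = v then 1 else 0)" if v': "v' \<in> T" for v'
    proof -
      obtain r' where r': "r' \<in> R" "v' = orbit_vec \<sigma> r'" using v' T by blast
      have "v' r = (if r' = r then 1 else 0)" "v r = 1"
        using orbit_vec_at[of r \<sigma> r', OF assms[OF r(1) r'(1)]]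
          orbit_vec_at[of r \<sigma> r, OF assms[OF r(1) r(1)]] r r'
        by simp_all
      then show ?thesis using r r' by (cases "r' = r") auto
    qed
    have "0 = (\<Sum>v\<in>T. gscale (u v) v) r" using T by simp
    also have "\<dots> = (\<Sum>v'\<in>T. u v' * (if v' = v then 1 else 0))"
      unfolding sum_fun_apply gscale_def using val by (intro sum.cong) auto
    also have "\<dots> = u v" using T v by (simp add: if_distrib cong: if_cong)
    finally show False using v by simp
  qed
qed

lemma neg_eigenspace_outside: "\<alpha> \<in> neg_eigenspace n \<sigma> \<Longrightarrow> g \<notin> dih n \<Longrightarrow> \<alpha> g = 0"
  unfolding neg_eigenspace_def using galg_outside by blast

lemma neg_eigenspace_fixed_point:
  fixes \<alpha> :: "nat \<times> nat \<Rightarrow> 'a::field"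
  assumes "(2::'a) \<noteq> 0" "\<alpha> \<in> neg_eigenspace n \<sigma>" "x \<in> dih n" "\<sigma> x = x"
  shows "\<alpha> x = 0"
proof -
  have "\<alpha> (\<sigma> x) = - \<alpha> x" using assms(2,3) by (simp add: neg_eigenspace_def)
  then have "\<alpha> x = - \<alpha> x" unfolding assms(4) .
  then show ?thesis by (rule self_eq_neg_imp_zero[OF assms(1)])
qed

lemma neg_eigenspace_expansion:
  fixes \<alpha> :: "nat \<times> nat \<Rightarrow> 'a::field"
  assumes two: "(2::'a) \<noteq> 0"
    and \<sigma>_dih: "\<And>x. x \<in> dih n \<Longrightarrow> \<sigma> x \<in> dih n"
    and \<sigma>_\<sigma>: "\<And>x. x \<in> dih n \<Longrightarrow> \<sigma> (\<sigma> x) = x"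
    and R_dih: "R \<subseteq> dih n"
    and disjoint: "\<And>r r'. r \<in> R \<Longrightarrow> r' \<in> R \<Longrightarrow> r \<noteq> \<sigma> r'"
    and cover: "\<And>x. x \<in> dih n \<Longrightarrow> \<sigma> x \<noteq> x \<Longrightarrow> x \<in> R \<or> \<sigma> x \<in> R"
    and \<alpha>: "\<alpha> \<in> neg_eigenspace n \<sigma>"
  shows "\<alpha> g = (\<Sum>r\<in>R. \<alpha> r * orbit_vec \<sigma> r g)"
proof -
  have fin: "finite R" using R_dih finite_dih by (rule finite_subset)
  have vec_W: "(orbit_vec \<sigma> r :: nat \<times> nat \<Rightarrow> 'a) \<in> neg_eigenspace n \<sigma>" if "r \<in> R" for r
    using \<sigma>_dih \<sigma>_\<sigma> subsetD[OF R_dih that] by (rule orbit_vec_in_neg_eigenspace)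
  show ?thesis
  proof (cases "g \<in> dih n")
    case False
    have "\<alpha> g = 0" using \<alpha> False by (rule neg_eigenspace_outside)
    moreover have "orbit_vec \<sigma> r g = (0::'a)" if "r \<in> R" for r
      using vec_W[OF that] False by (rule neg_eigenspace_outside)
    ultimately show ?thesis by simp
  next
    case g: True
    consider "g \<in> R" | "\<sigma> g \<in> R" | "\<sigma> g = g" using cover[OF g] by blast
    then show ?thesis
    proof cases
      case 1
      then show ?thesis by (rule sum_orbit_vec_at[where \<sigma> = \<sigma> and c = \<alpha>, OF fin _ disjoint, symmetric])
    next
      case 2
      have "orbit_vec \<sigma> r g = - (orbit_vec \<sigma> r (\<sigma> g) :: 'a)" if "r \<in> R" for r
      proof -
        have "orbit_vec \<sigma> r (\<sigma> (\<sigma> g)) = - (orbit_vec \<sigma> r (\<sigma> g) :: 'a)"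
          using vec_W[OF that] \<sigma>_dih[OF g] unfolding neg_eigenspace_def by blast
        then show ?thesis unfolding \<sigma>_\<sigma>[OF g] .
      qed
      then have "(\<Sum>r\<in>R. \<alpha> r * orbit_vec \<sigma> r g) = - (\<Sum>r\<in>R. \<alpha> r * orbit_vec \<sigma> r (\<sigma> g))"
        by (simp add: sum_negf)
      also have "\<dots> = \<alpha> g"
        using sum_orbit_vec_at[where \<sigma> = \<sigma> and c = \<alpha>, OF fin 2 disjoint] \<alpha> g
        by (simp add: neg_eigenspace_def)
      finally show ?thesis ..
    next
      case 3
      have "\<alpha> g = 0" using two \<alpha> g 3 by (rule neg_eigenspace_fixed_point)
      moreover have "orbit_vec \<sigma> r g = (0::'a)" if "r \<in> R" for r
        using two vec_W[OF that] g 3 by (rule neg_eigenspace_fixed_point)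
      ultimately show ?thesis by simp
    qed
  qed
qed

lemma is_basis_of_neg_eigenspace:
  fixes \<sigma> :: "nat \<times> nat \<Rightarrow> nat \<times> nat"
  assumes two: "(2::'a::field) \<noteq> 0"
    and \<sigma>_dih: "\<And>x. x \<in> dih n \<Longrightarrow> \<sigma> x \<in> dih n"
    and \<sigma>_\<sigma>: "\<And>x. x \<in> dih n \<Longrightarrow> \<sigma> (\<sigma> x) = x"
    and R_dih: "R \<subseteq> dih n"
    and disjoint: "\<And>r r'. r \<in> R \<Longrightarrow> r' \<in> R \<Longrightarrow> r \<noteq> \<sigma> r'"
    and cover: "\<And>x. x \<in> dih n \<Longrightarrow> \<sigma> x \<noteq> x \<Longrightarrow> x \<in> R \<or> \<sigma> x \<in> R"
  shows "is_basis_of (neg_eigenspace n \<sigma> :: (nat \<times> nat \<Rightarrow> 'a) set) (orbit_vec \<sigma> ` R)"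
proof -
  interpret M: module "gscale :: 'a \<Rightarrow> _" by (rule gscale_module)
  let ?W = "neg_eigenspace n \<sigma> :: (nat \<times> nat \<Rightarrow> 'a) set"
  let ?B = "orbit_vec \<sigma> ` R :: (nat \<times> nat \<Rightarrow> 'a) set"
  have basis_in: "?B \<subseteq> ?W"
  proof
    fix v assume "v \<in> ?B"
    then obtain r where "r \<in> R" "v = orbit_vec \<sigma> r" by blast
    then show "v \<in> ?W" using orbit_vec_in_neg_eigenspace[OF \<sigma>_dih \<sigma>_\<sigma> subsetD[OF R_dih]] by simp
  qed
  have W_span: "\<alpha> \<in> M.span ?B" if "\<alpha> \<in> ?W" for \<alpha>
  proof -
    have "\<alpha> = (\<Sum>r\<in>R. gscale (\<alpha> r) (orbit_vec \<sigma> r))"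
      unfolding fun_eq_iff sum_fun_apply gscale_def
      by (rule allI, rule neg_eigenspace_expansion[OF assms that])
    also have "\<dots> \<in> M.span ?B"
      by (intro M.span_sum M.span_scale M.span_base imageI)
    finally show ?thesis .
  qed
  have "M.subspace ?W"
    by (auto simp: M.subspace_def neg_eigenspace_def galg_def gscale_def)
  then have "M.span ?B \<subseteq> ?W"
    using basis_in by (rule M.span_minimal[rotated])
  moreover have "?W \<subseteq> M.span ?B"
    using W_span by (rule subsetI)
  ultimately have span_eq: "M.span ?B = ?W"
    by (rule subset_antisym)
  show ?thesis
    unfolding is_basis_of_def by (intro conjI basis_in independent_orbit_vecs[OF disjoint] span_eq)
qed

section \<open>Conjugation by the reflections \<open>a\<^sup>kb\<close>\<close>

text \<open>\<open>reflect n c i\<close> is \<open>2c - i\<close> modulo \<open>n\<close>; adding \<open>n\<close> avoids truncated subtraction for \<open>i < n\<close>.\<close>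

definition reflect :: "nat \<Rightarrow> nat \<Rightarrow> nat \<Rightarrow> nat" where
  "reflect n c i = (2 * c + n - i) mod n"

lemma reflect_eq:
  assumes "2 * c < n" "i < n"
  shows "reflect n c i = (if i \<le> 2 * c then 2 * c - i else 2 * c + n - i)"
  using assms by (auto simp: reflect_def mod_less_2n)

lemma reflect_less: "0 < n \<Longrightarrow> reflect n c i < n"
  by (simp add: reflect_def)

lemma reflect_reflect:
  assumes "2 * c < n" "i < n"
  shows "reflect n c (reflect n c i) = i"
  using assms reflect_less[of n c i]
  by (simp only: reflect_eq[OF assms] reflect_eq[OF assms(1)] split: if_split) linarith

lemma reflect_not_in_half:
  assumes "2 * c < n" "c < i" "i \<le> c + (n - 1) div 2" "c < i'" "i' \<le> c + (n - 1) div 2"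
  shows "i \<noteq> reflect n c i'"
proof -
  have "n - 1 \<le> 2 * ((n - 1) div 2) + 1" "i' < n" using assms by linarith+
  with assms show ?thesis by (simp only: reflect_eq split: if_split) linarith
qed

lemma reflect_half_cover:
  assumes "2 * c < n" "i < n" "reflect n c i \<noteq> i"
  shows "c < i \<and> i \<le> c + (n - 1) div 2 \<or> c < reflect n c i \<and> reflect n c i \<le> c + (n - 1) div 2"
proof -
  define m where "m = (n - 1) div 2"
  have m: "2 * m \<le> n - 1" "n - 1 \<le> 2 * m + 1" unfolding m_def by linarith+
  have "c \<le> m" using assms(1) m by linarith
  have "c < i \<and> i \<le> c + m \<or> c < reflect n c i \<and> reflect n c i \<le> c + m"
  proof (cases "i \<le> 2 * c")
    case True
    then have r: "reflect n c i = 2 * c - i" using assms(1,2) by (simp add: reflect_eq)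
    show ?thesis
    proof (cases "c < i")
      case True
      then show ?thesis using \<open>i \<le> 2 * c\<close> assms(1) m by linarith
    next
      case False
      then show ?thesis using r assms(3) \<open>c \<le> m\<close> by (intro disjI2) linarith
    qed
  next
    case False
    then have r: "reflect n c i = 2 * c + n - i" using assms(1,2) by (simp add: reflect_eq)
    show ?thesis
    proof (cases "i \<le> c + m")
      case True
      then show ?thesis using False by linarith
    next
      case False
      then show ?thesis using r assms(2,3) m by (intro disjI2) linarith
    qed
  qed
  then show ?thesis unfolding m_def .
qed

lemma int_reflect: "i < n \<Longrightarrow> int (reflect n c i) = (2 * int c - int i) mod int n"
proof -
  assume "i < n"
  then have "int (2 * c + n - i) = (2 * int c - int i) + int n" by simp
  then show ?thesis by (simp add: reflect_def zmod_int)
qed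

lemma reflect_shift: "k + i < n \<Longrightarrow> reflect n k (k + i) = (k + reflect n 0 i) mod n"
proof -
  assume "k + i < n"
  then have "int (reflect n k (k + i)) = int ((k + reflect n 0 i) mod n)"
    by (simp add: int_reflect zmod_int mod_add_right_eq algebra_simps)
  then show ?thesis by simp
qed

definition reflection_conj :: "nat \<Rightarrow> nat \<Rightarrow> nat \<times> nat \<Rightarrow> nat \<times> nat" where
  "reflection_conj n k x = (reflect n (k * snd x) (fst x), snd x)"

lemma dmul_reflection_conj:
  assumes "k < n" "x \<in> dih n"
  shows "dmul n (k, 1) (dmul n x (k, 1)) = reflection_conj n k x"
proof -
  obtain i j where x: "x = (i, j)" "i < n" "j < 2" using assms(2) by (cases x) (auto simp: dih_iff)
  have k: "(k, 1) \<in> dih n" using assms(1) by (simp add: dih_iff)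
  have "int (fst (dmul n (k, 1) (dmul n x (k, 1)))) = (int k - (int i + (- 1) ^ j * int k)) mod int n"
    using x k assms by (simp add: int_fst_dmul dmul_in_dih mod_diff_right_eq)
  also have "\<dots> = int (reflect n (k * j) i)"
    using x by (auto simp: int_reflect algebra_simps less_2_cases_iff)
  moreover have "snd (dmul n (k, 1) (dmul n x (k, 1))) = j"
    using x by (auto simp: snd_dmul less_2_cases_iff)
  ultimately show ?thesis unfolding x(1) by (simp add: prod_eq_iff reflection_conj_def)
qed

text \<open>On the coset \<open>\<langle>a\<rangle>b\<^sup>j\<close>, \<open>reflection_conj n k\<close> reflects about \<open>kj\<close>; the representatives are the
  \<open>\<lfloor>(n - 1)/2\<rfloor>\<close> exponents just above the centre.\<close>

definition half_reps :: "nat \<Rightarrow> nat \<Rightarrow> (nat \<times> nat) set" where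
  "half_reps n k = {(i, j). j < 2 \<and> k * j < i \<and> i \<le> k * j + (n - 1) div 2}"

lemma half_reps_eq:
  "half_reps n k = (\<lambda>i. (i, 0)) ` {1..(n - 1) div 2} \<union> (\<lambda>i. (k + i, 1)) ` {1..(n - 1) div 2}"
proof (intro set_eqI iffI)
  fix r assume "r \<in> half_reps n k"
  then obtain i j where r: "r = (i, j)" "j = 0 \<or> j = 1" "k * j < i" "i \<le> k * j + (n - 1) div 2"
    by (auto simp: half_reps_def less_2_cases_iff)
  show "r \<in> (\<lambda>i. (i, 0)) ` {1..(n - 1) div 2} \<union> (\<lambda>i. (k + i, 1)) ` {1..(n - 1) div 2}"
  proof (cases "j = 0")
    case True
    then show ?thesis using r by auto
  next
    case False
    then have "r = (k + (i - k), 1)" "i - k \<in> {1..(n - 1) div 2}" using r by auto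
    then show ?thesis by blast
  qed
qed (auto simp: half_reps_def)

lemma anticent_reflection:
  assumes "k < n"
  shows "anticent n (gel (k, 1)) = neg_eigenspace n (reflection_conj n k)"
proof -
  have t: "(k, 1) \<in> dih n" "dmul n (k, 1) (k, 1) = (0, 0)"
    using assms by (simp_all add: dih_iff dmul_def)
  show ?thesis
    unfolding anticent_gel_involution[OF t] neg_eigenspace_def
    by (intro Collect_cong conj_cong refl ball_cong) (simp only: dmul_reflection_conj[OF assms])
qed

lemma is_basis_of_anticent_reflection:
  assumes k: "2 * k < n" and two: "(2::'a::field) \<noteq> 0"
  shows "is_basis_of (anticent n (gel (k, 1)) :: (nat \<times> nat \<Rightarrow> 'a) set)
           (orbit_vec (reflection_conj n k) ` half_reps n k)"
proof -
  have c: "2 * (k * j) < n" if "j < 2" for j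
    using that k by (cases j) auto
  have "is_basis_of (neg_eigenspace n (reflection_conj n k) :: (nat \<times> nat \<Rightarrow> 'a) set)
           (orbit_vec (reflection_conj n k) ` half_reps n k)"
  proof (rule is_basis_of_neg_eigenspace[OF two])
    show "reflection_conj n k x \<in> dih n" if "x \<in> dih n" for x
      using that k by (cases x) (simp add: reflection_conj_def dih_iff reflect_less)
    show "reflection_conj n k (reflection_conj n k x) = x" if "x \<in> dih n" for x
      using that c by (cases x) (simp add: reflection_conj_def dih_iff reflect_reflect)
    show "half_reps n k \<subseteq> dih n"
    proof
      fix r assume "r \<in> half_reps n k"
      then obtain i j where "r = (i, j)" "j < 2" "i \<le> k * j + (n - 1) div 2"
        by (auto simp: half_reps_def)
      moreover have "2 * (k * j) < n" using c \<open>j < 2\<close> .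
      ultimately show "r \<in> dih n" by (simp add: dih_iff)
    qed
    show "r \<noteq> reflection_conj n k r'" if reps: "r \<in> half_reps n k" "r' \<in> half_reps n k" for r r'
    proof -
      obtain i j i' j' where "r = (i, j)" "r' = (i', j')" "j < 2"
        "k * j < i" "i \<le> k * j + (n - 1) div 2" "k * j' < i'" "i' \<le> k * j' + (n - 1) div 2"
        using reps by (auto simp: half_reps_def)
      then show ?thesis
        using reflect_not_in_half[OF c[of j], of i i'] by (auto simp: reflection_conj_def)
    qed
    show "x \<in> half_reps n k \<or> reflection_conj n k x \<in> half_reps n k"
      if "x \<in> dih n" "reflection_conj n k x \<noteq> x" for x
      using that c reflect_half_cover by (cases x) (auto simp: half_reps_def reflection_conj_def dih_iff)
  qed
  moreover have "k < n" using k by linarith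
  ultimately show ?thesis by (simp only: anticent_reflection)
qed

lemma ael_of_nat: "i < n \<Longrightarrow> ael n (int i) = gel (i, 0)"
  by (simp add: ael_def)

lemma ael_uminus_of_nat:
  assumes "i < n"
  shows "ael n (- int i) = gel (reflect n 0 i, 0)"
proof -
  have "reflect n 0 i = nat (int (reflect n 0 i))" by simp
  also have "\<dots> = nat (- int i mod int n)" using int_reflect[OF assms, of 0] by simp
  finally show ?thesis by (simp add: ael_def)
qed

lemma ael_in_galg: "0 < n \<Longrightarrow> ael n i \<in> galg n"
  unfolding ael_def by (rule gel_in_galg) (simp add: dih_iff nat_less_iff)

lemma orbit_vec_rotation:
  assumes "i < n"
  shows "orbit_vec (reflection_conj n k) (i, 0) = ael n (int i) - ael n (- int i)"
  using assms by (simp add: orbit_vec_def reflection_conj_def ael_of_nat ael_uminus_of_nat)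

lemma orbit_vec_reflection:
  assumes "k + i < n"
  shows "orbit_vec (reflection_conj n k) (k + i, 1)
       = gmul n (gmul n (ael n (int k)) (ael n (int i) - ael n (- int i))) bel"
proof -
  have n: "0 < n" and lt: "k < n" "i < n" using assms by simp_all
  have dih: "(k, 0) \<in> dih n" "(i, 0) \<in> dih n" "(reflect n 0 i, 0) \<in> dih n" "(0, 1) \<in> dih n"
    using assms by (simp_all add: dih_iff reflect_less)
  have rot_b: "gmul n (gmul n (gel (k, 0)) (gel (p, 0))) (gel (0, 1)) = gel ((k + p) mod n, 1)"
    if "(p, 0) \<in> dih n" for p :: nat
    using that dih n by (simp add: gmul_gel_gel dmul_in_dih) (simp add: dmul_def)
  have "gmul n (gmul n (ael n (int k)) (ael n (int i) - ael n (- int i))) bel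
      = gmul n (gmul n (gel (k, 0)) (gel (i, 0))) (gel (0, 1))
        - gmul n (gmul n (gel (k, 0)) (gel (reflect n 0 i, 0))) (gel (0, 1))"
    using lt by (simp only: ael_of_nat ael_uminus_of_nat bel_def gmul_diff_left gmul_diff_right)
  also have "\<dots> = gel (k + i, 1) - gel ((k + reflect n 0 i) mod n, 1)"
    using assms by (simp only: rot_b dih mod_less)
  also have "(k + reflect n 0 i) mod n = fst (reflection_conj n k (k + i, 1))"
    using assms by (simp add: reflection_conj_def reflect_shift)
  finally have "gmul n (gmul n (ael n (int k)) (ael n (int i) - ael n (- int i))) bel
      = gel (k + i, 1) - gel (fst (reflection_conj n k (k + i, 1)), 1)" .
  then show ?thesis
    unfolding orbit_vec_def reflection_conj_def fst_conv snd_conv mult_1_right by (rule sym)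
qed

lemma is_basis_of_anticent_rotation_reflection:
  assumes k: "2 * k < n" and two: "(2::'a::field) \<noteq> 0"
  shows "is_basis_of (anticent n (gmul n (ael n (int k)) bel) :: (nat \<times> nat \<Rightarrow> 'a) set)
           ((\<lambda>i. ael n (int i) - ael n (- int i)) ` {1..(n - 1) div 2} \<union>
            (\<lambda>i. gmul n (gmul n (ael n (int k)) (ael n (int i) - ael n (- int i))) bel) ` {1..(n - 1) div 2})"
proof -
  have small: "i < n" "k + i < n" if "i \<in> {1..(n - 1) div 2}" for i
    using that k by auto
  have ak_b: "gmul n (ael n (int k)) bel = (gel (k, 1) :: nat \<times> nat \<Rightarrow> 'a)"
    using k by (simp add: ael_of_nat bel_def gmul_gel_gel dih_iff) (simp add: dmul_def)
  have basis_eq: "orbit_vec (reflection_conj n k) ` half_reps n k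
      = (\<lambda>i. ael n (int i) - ael n (- int i)) ` {1..(n - 1) div 2} \<union>
        (\<lambda>i. gmul n (gmul n (ael n (int k)) (ael n (int i) - ael n (- int i))) bel) ` {1..(n - 1) div 2}"
    unfolding half_reps_eq image_Un image_image
  proof (intro arg_cong2[where f = "(\<union>)"] image_cong[OF refl])
    show "orbit_vec (reflection_conj n k) (i, 0) = ael n (int i) - ael n (- int i)"
      if "i \<in> {1..(n - 1) div 2}" for i
      using orbit_vec_rotation small(1)[OF that] .
    show "orbit_vec (reflection_conj n k) (k + i, 1)
        = gmul n (gmul n (ael n (int k)) (ael n (int i) - ael n (- int i))) bel"
      if "i \<in> {1..(n - 1) div 2}" for i
      using orbit_vec_reflection small(2)[OF that] .
  qed
  show ?thesis
    using is_basis_of_anticent_reflection[OF k two] unfolding ak_b basis_eq .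
qed

theorem lemma3p2:
  fixes n :: nat
  assumes "n \<ge> 3"
    and "CHAR('a::field) = 0 \<or> (prime (CHAR('a)) \<and> odd (CHAR('a)))"
  shows "is_basis_of (anticent n (bel :: nat \<times> nat \<Rightarrow> 'a))
           ((\<lambda>i. ael n (int i) - ael n (- int i)) ` {1..(n - 1) div 2} \<union>
            (\<lambda>i. gmul n (ael n (int i) - ael n (- int i)) bel) ` {1..(n - 1) div 2})
       \<and> is_basis_of (anticent n (gmul n (ael n 1) (bel :: nat \<times> nat \<Rightarrow> 'a)))
           ((\<lambda>i. ael n (int i) - ael n (- int i)) ` {1..(n - 1) div 2} \<union>
            (\<lambda>i. gmul n (gmul n (ael n 1) (ael n (int i) - ael n (- int i))) bel) ` {1..(n - 1) div 2})"
proof -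
  have two: "(2::'a) \<noteq> 0" using assms(2) by (intro two_neq_zero_if_CHAR_neq_2) auto
  have n: "0 < n" "2 * 0 < n" "2 * 1 < n" using assms(1) by simp_all
  have a0: "gmul n (ael n (int 0)) \<beta> = \<beta>" if "\<beta> \<in> galg n" for \<beta> :: "nat \<times> nat \<Rightarrow> 'a"
    using gmul_unit_left[OF n(1) that] by (simp add: ael_def)
  have diff_galg: "ael n (int i) - ael n (- int i) \<in> galg n" for i
    using n(1) by (simp add: galg_diff ael_in_galg)
  have bel_galg: "bel \<in> galg n"
    using n(1) by (simp add: bel_def gel_in_galg dih_iff)
  \<comment> \<open>\<open>b = a\<^sup>0b\<close> and \<open>ab = a\<^sup>1b\<close>\<close>
  show ?thesis
    using is_basis_of_anticent_rotation_reflection[OF n(2) two]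
      is_basis_of_anticent_rotation_reflection[OF n(3) two]
    unfolding a0[OF bel_galg] a0[OF diff_galg] of_nat_1 by blast
qed

end
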